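(* Let $\mathcal S_2=\{\rho_\theta:\theta\in\Theta_2\}$, $\Theta_2\subset\mathbb{R}^{d_2}$, be a quantum statistical model and $\mathcal S_1=\{\rho_{(\theta_1,\dots,\theta_{d_1},0,\dots,0)}\}$ the submodel with $d_1\le d_2$ free parameters. Fix $\theta=(\theta_1,\dots,\theta_{d_1},0,\dots,0)\in\Theta_2$ and assume $\mathcal S_2$ is D-invariant at $\theta$. Let $\vec X=(X^1,\dots,X^{d_1})$ be Hermitian matrices lying in the real span of the SLDs $L_{\theta;1},\dots,L_{\theta;d_2}$ of $\mathcal S_2$ and satisfying $\mathrm{Tr}\,(\partial_k\rho_\theta)X^j=\delta^j_k$ for $j,k=1,\dots,d_1$. Define the $d_1\times d_2$ real matrix $P_{\vec X}$ by $(P_{\vec X})^k_l=\mathrm{Tr}\,(\partial_l\rho_\theta)X^k$ ($k\le d_1$, $l\le d_2$). Then for every real symmetric positive definite $d_1\times d_1$ matrix $G$, $$C_\theta(G,\vec X)=C^R_{\theta,2}\big(P_{\vec X}^TGP_{\vec X}\big),$$ where $C^R_{\theta,2}$ denotes the RLD bound of the model $\mathcal S_2$ at $\theta$ (evaluated at the positive semidefinite $d_2\times d_2$ weight $P_{\vec X}^TGP_{\vec X}$).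
   Context: A quantum statistical model is a family of strictly positive density matrices on a finite-dimensional Hilbert space depending smoothly on a parameter in an open subset of $\mathbb{R}^d$; $\partial_k=\partial/\partial\theta^k$. Notation: $X\circ Y=(XY+YX)/2$; $\langle X,Y\rangle_\theta=\mathrm{Tr}\,\rho_\theta(X^*\circ Y)$. SLDs $L_{\theta;j}$: Hermitian with $\partial_j\rho_\theta=\rho_\theta\circ L_{\theta;j}$. RLDs $\tilde L_{\theta;j}$: $\partial_j\rho_\theta=\rho_\theta\tilde L_{\theta;j}$; RLD Fisher matrix $\tilde J_{\theta;j,k}=\mathrm{Tr}\,\rho_\theta\tilde L_{\theta;k}\tilde L_{\theta;j}^*$. The D-operator $\mathcal D_\theta$ is defined on Hermitian matrices by $\rho_\theta\circ\mathcal D_\theta(X)=i[X,\rho_\theta]$; the model is D-invariant at $\theta$ if the real span of its SLDs at $\theta$ is mapped into itself by $\mathcal D_\theta$. For a complex matrix $W$: $\mathrm{Re}\,W=(W+\bar W)/2$, $\mathrm{Im}\,W=(W-\bar W)/(2i)$, $|A|=(A^*A)^{1/2}$. RLD bound with weight $H$ (real symmetric positive semidefinite): $C^R_\theta(H)=\mathrm{tr}\sqrt H\,\mathrm{Re}(\tilde J_\theta^{-1})\sqrt H+\mathrm{tr}|\sqrt H\,\mathrm{Im}(\tilde J_\theta^{-1})\sqrt H|$. For a tuple $\vec X$ of Hermitian matrices, $Z_\theta^{k,j}(\vec X)=\mathrm{Tr}\,\rho_\theta X^kX^j$ and $C_\theta(G,\vec X)=\mathrm{tr}\sqrt G\,\mathrm{Re}\,Z_\theta(\vec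 X)\sqrt G+\mathrm{tr}|\sqrt G\,\mathrm{Im}\,Z_\theta(\vec X)\sqrt G|$. *)

theory Defs
  imports "HOL-Analysis.Analysis"
begin

definition adj :: "complex^'n^'m \<Rightarrow> complex^'m^'n" where
  "adj A = (\<chi> i j. cnj (A $ j $ i))"

definition hermitian :: "complex^'n^'n \<Rightarrow> bool" where
  "hermitian A \<longleftrightarrow> adj A = A"

definition cscale :: "complex \<Rightarrow> complex^'n^'m \<Rightarrow> complex^'n^'m" where
  "cscale c A = (\<chi> i j. c * A $ i $ j)"

definition jprod :: "complex^'n^'n \<Rightarrow> complex^'n^'n \<Rightarrow> complex^'n^'n" where
  "jprod X Y = (1/2::real) *\<^sub>R (X ** Y + Y ** X)"

definition cinner :: "complex^'n \<Rightarrow> complex^'n \<Rightarrow> complex" where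
  "cinner x y = (\<Sum>i\<in>UNIV. cnj (x $ i) * y $ i)"

definition strictly_pos_density :: "complex^'n^'n \<Rightarrow> bool" where
  "strictly_pos_density A \<longleftrightarrow> hermitian A \<and> trace A = 1 \<and>
     (\<forall>x. x \<noteq> 0 \<longrightarrow> 0 < Re (cinner x (A *v x)))"

definition dir_deriv :: "'a::real_normed_vector \<Rightarrow> ('a \<Rightarrow> 'b::real_normed_vector) \<Rightarrow> 'a \<Rightarrow> 'b" where
  "dir_deriv v f = (\<lambda>x. frechet_derivative f (at x) v)"

text \<open>C-infinity on an open set: all iterated directional derivatives exist and are differentiable\<close>
definition smooth_on :: "'a::real_normed_vector set \<Rightarrow> ('a \<Rightarrow> 'b::real_normed_vector) \<Rightarrow> bool" where
  "smooth_on S f \<longleftrightarrow> (\<forall>vs. (foldr dir_deriv vs f) differentiable_on S)"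

definition qmodel :: "(real^'d) set \<Rightarrow> (real^'d \<Rightarrow> complex^'n^'n) \<Rightarrow> bool" where
  "qmodel \<Theta> \<rho> \<longleftrightarrow> open \<Theta> \<and> (\<forall>\<theta>\<in>\<Theta>. strictly_pos_density (\<rho> \<theta>)) \<and> smooth_on \<Theta> \<rho>"

definition partial_rho :: "(real^'d \<Rightarrow> complex^'n^'n) \<Rightarrow> real^'d \<Rightarrow> 'd \<Rightarrow> complex^'n^'n" where
  "partial_rho \<rho> \<theta> k = frechet_derivative \<rho> (at \<theta>) (axis k 1)"

definition SLD :: "(real^'d \<Rightarrow> complex^'n^'n) \<Rightarrow> real^'d \<Rightarrow> 'd \<Rightarrow> complex^'n^'n" where
  "SLD \<rho> \<theta> j = (THE L. hermitian L \<and> partial_rho \<rho> \<theta> j = jprod (\<rho> \<theta>) L)"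

definition RLD :: "(real^'d \<Rightarrow> complex^'n^'n) \<Rightarrow> real^'d \<Rightarrow> 'd \<Rightarrow> complex^'n^'n" where
  "RLD \<rho> \<theta> j = (THE L. partial_rho \<rho> \<theta> j = \<rho> \<theta> ** L)"

definition RLD_Fisher :: "(real^'d \<Rightarrow> complex^'n^'n) \<Rightarrow> real^'d \<Rightarrow> complex^'d^'d" where
  "RLD_Fisher \<rho> \<theta> = (\<chi> j k. trace (\<rho> \<theta> ** RLD \<rho> \<theta> k ** adj (RLD \<rho> \<theta> j)))"

definition D_op :: "(real^'d \<Rightarrow> complex^'n^'n) \<Rightarrow> real^'d \<Rightarrow> complex^'n^'n \<Rightarrow> complex^'n^'n" where
  "D_op \<rho> \<theta> X = (THE Y. hermitian Y \<and>
      jprod (\<rho> \<theta>) Y = cscale \<i> (X ** \<rho> \<theta> - \<rho> \<theta> ** X))"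

text \<open>span is the real span (complex matrices as a real vector space)\<close>
definition D_invariant :: "(real^'d \<Rightarrow> complex^'n^'n) \<Rightarrow> real^'d \<Rightarrow> bool" where
  "D_invariant \<rho> \<theta> \<longleftrightarrow>
     (\<forall>X \<in> span (range (SLD \<rho> \<theta>)). D_op \<rho> \<theta> X \<in> span (range (SLD \<rho> \<theta>)))"

definition psd :: "real^'m^'m \<Rightarrow> bool" where
  "psd A \<longleftrightarrow> transpose A = A \<and> (\<forall>x. 0 \<le> x \<bullet> (A *v x))"

definition posdef :: "real^'m^'m \<Rightarrow> bool" where
  "posdef A \<longleftrightarrow> transpose A = A \<and> (\<forall>x. x \<noteq> 0 \<longrightarrow> 0 < x \<bullet> (A *v x))"

definition msqrt :: "real^'m^'m \<Rightarrow> real^'m^'m" where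
  "msqrt A = (THE B. psd B \<and> B ** B = A)"

definition mabs :: "real^'m^'m \<Rightarrow> real^'m^'m" where
  "mabs A = msqrt (transpose A ** A)"

definition mRe :: "complex^'n^'m \<Rightarrow> real^'n^'m" where
  "mRe W = (\<chi> i j. Re (W $ i $ j))"

definition mIm :: "complex^'n^'m \<Rightarrow> real^'n^'m" where
  "mIm W = (\<chi> i j. Im (W $ i $ j))"

definition RLD_bound :: "(real^'d \<Rightarrow> complex^'n^'n) \<Rightarrow> real^'d \<Rightarrow> real^'d^'d \<Rightarrow> real" where
  "RLD_bound \<rho> \<theta> H =
     (let Jinv = matrix_inv (RLD_Fisher \<rho> \<theta>) in
      trace (msqrt H ** mRe Jinv ** msqrt H) + trace (mabs (msqrt H ** mIm Jinv ** msqrt H)))"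

definition Zmat :: "(real^'d \<Rightarrow> complex^'n^'n) \<Rightarrow> real^'d \<Rightarrow> ('k \<Rightarrow> complex^'n^'n) \<Rightarrow> complex^'k^'k" where
  "Zmat \<rho> \<theta> X = (\<chi> k j. trace (\<rho> \<theta> ** X k ** X j))"

definition C_bound :: "(real^'d \<Rightarrow> complex^'n^'n) \<Rightarrow> real^'d \<Rightarrow> real^'k^'k \<Rightarrow> ('k \<Rightarrow> complex^'n^'n) \<Rightarrow> real" where
  "C_bound \<rho> \<theta> G X =
     trace (msqrt G ** mRe (Zmat \<rho> \<theta> X) ** msqrt G) + trace (mabs (msqrt G ** mIm (Zmat \<rho> \<theta> X) ** msqrt G))"

text \<open>(P_X)^k_l = Tr (d_l rho) X^k (real for Hermitian arguments)\<close>
definition Pmat :: "(real^'d \<Rightarrow> complex^'n^'n) \<Rightarrow> real^'d \<Rightarrow> ('k \<Rightarrow> complex^'n^'n) \<Rightarrow> real^'d^'k" where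
  "Pmat \<rho> \<theta> X = (\<chi> k l. Re (trace (partial_rho \<rho> \<theta> l ** X k)))"

end

theory Submission
  imports Defs
begin

text \<open>
  D-invariance makes every Hermitian \<open>X\<close> in the SLD span a complex combination
  \<open>X = \<Sum>\<^sub>l c\<^sub>l L\<^sub>l\<close> of the RLDs \<open>L\<^sub>l\<close>: \<open>\<rho>X = \<rho>\<circ>X + (i/2) \<rho>\<circ>D(X)\<close>, both Jordan products are
  real combinations of the \<open>\<partial>\<^sub>l\<rho> = \<rho>L\<^sub>l\<close>, and left multiplication by the strictly positive
  \<open>\<rho>\<close> is injective. With \<open>C = (c\<^sub>k\<^sub>l)\<close> and \<open>J\<close> the RLD Fisher matrix, the trace identities
  \<open>P = conj(C) J\<close> and \<open>Z = C J\<^sup>T C\<^sup>*\<close> give \<open>Z = P conj(J\<^sup>-\<^sup>1) P\<^sup>T\<close>, hence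
  \<open>Re Z = P Re(J\<^sup>-\<^sup>1) P\<^sup>T\<close> and \<open>Im Z = -P Im(J\<^sup>-\<^sup>1) P\<^sup>T\<close>. Both terms of \<open>C(G, X)\<close> then depend
  on the weight only through \<open>H = P\<^sup>T G P\<close>: the first by cyclicity of the trace, the second
  because \<open>tr \<surd>(Y\<^sup>T Y) = tr \<surd>(Y Y\<^sup>T)\<close>.
\<close>

section \<open>Spectral theorem for real symmetric matrices\<close>

lemma symmetric_matrix_inner_commute:
  fixes A :: "real^'n^'n"
  assumes "transpose A = A"
  shows "x \<bullet> (A *v y) = (A *v x) \<bullet> y"
  by (metis assms dot_lmul_matrix inner_commute transpose_matrix_vector)

lemma transpose_matrix_inner:
  fixes Y :: "real^'a^'b"
  shows "x \<bullet> (transpose Y *v z) = (Y *v x) \<bullet> z"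
  by (metis dot_lmul_matrix inner_commute transpose_matrix_vector)

lemma linear_le_quadratic_imp_zero:
  fixes c d :: real
  assumes "\<And>t. 2 * t * c \<le> t\<^sup>2 * d"
  shows "c = 0"
proof (rule ccontr)
  assume c0: "c \<noteq> 0"
  define t where "t = c / (\<bar>d\<bar> + 1)"
  have et: "(\<bar>d\<bar> + 1) * t = c" unfolding t_def by simp
  have "(\<bar>d\<bar> + 1)\<^sup>2 * (2 * t * c) \<le> (\<bar>d\<bar> + 1)\<^sup>2 * (t\<^sup>2 * d)"
    by (rule mult_left_mono[OF assms]) simp
  hence "2 * c * c * (\<bar>d\<bar> + 1) \<le> c * c * d"
    by (metis et power2_eq_square mult.assoc mult.commute mult.left_commute)
  moreover have "c * c * d \<le> c * c * \<bar>d\<bar>" by (simp add: mult_left_mono)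
  moreover have "c * c > 0" using c0 by (metis not_real_square_gt_zero)
  moreover have "2 * c * c * (\<bar>d\<bar> + 1) = 2 * (c * c * \<bar>d\<bar>) + 2 * (c * c)"
    by (simp add: algebra_simps)
  ultimately show False by (smt (verit) mult_nonneg_nonneg abs_ge_zero)
qed

lemma rayleigh_max_imp_eigenvector:
  fixes A :: "real^'n^'n"
  assumes symA: "transpose A = A" and S: "subspace S" and inv: "\<forall>x\<in>S. A *v x \<in> S"
    and v: "v \<in> S" "norm v = 1"
    and max: "\<And>u. u \<in> S \<Longrightarrow> norm u = 1 \<Longrightarrow> u \<bullet> (A *v u) \<le> v \<bullet> (A *v v)"
  shows "A *v v = (v \<bullet> (A *v v)) *\<^sub>R v"
proof -
  define l where "l = v \<bullet> (A *v v)"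
  define w where "w = A *v v - l *\<^sub>R v"
  have vv: "v \<bullet> v = 1" using v(2) by (simp add: dot_square_norm)
  have wS: "w \<in> S" unfolding w_def using inv v S by (simp add: subspace_diff subspace_mul)
  have wv: "w \<bullet> v = 0" unfolding w_def l_def using vv by (simp add: inner_diff_right inner_commute)
  have "2 * t * (w \<bullet> (A *v v)) \<le> t\<^sup>2 * (l * (w \<bullet> w) - w \<bullet> (A *v w))" for t
  proof -
    define u where "u = v + t *\<^sub>R w"
    have uS: "u \<in> S" unfolding u_def using S v wS by (simp add: subspace_add subspace_mul)
    have uu: "u \<bullet> u = 1 + t\<^sup>2 * (w \<bullet> w)"
      unfolding u_def using vv wv
      by (simp add: inner_add_left inner_add_right inner_commute power2_eq_square algebra_simps)
    hence "u \<bullet> u > 0" by (simp add: add_pos_nonneg)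
    hence "u \<noteq> 0" by auto
    have "(u /\<^sub>R norm u) \<bullet> (A *v (u /\<^sub>R norm u)) \<le> l"
      unfolding l_def by (rule max) (use uS S \<open>u \<noteq> 0\<close> in \<open>auto simp: subspace_mul\<close>)
    hence "(u \<bullet> (A *v u)) / (norm u)\<^sup>2 \<le> l"
      by (simp add: matrix_vector_mult_scaleR power2_eq_square divide_simps)
    hence "u \<bullet> (A *v u) \<le> l * (u \<bullet> u)" using \<open>u \<noteq> 0\<close>
      by (simp add: dot_square_norm divide_le_eq)
    moreover have "u \<bullet> (A *v u) = l + 2 * t * (w \<bullet> (A *v v)) + t\<^sup>2 * (w \<bullet> (A *v w))"
      using symmetric_matrix_inner_commute[OF symA, of v w] unfolding u_def l_def
      by (simp add: matrix_vector_right_distrib matrix_vector_mult_scaleR inner_add_left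
          inner_add_right power2_eq_square algebra_simps inner_commute)
    ultimately show ?thesis unfolding uu by (simp add: algebra_simps power2_eq_square)
  qed
  hence "w \<bullet> (A *v v) = 0" by (rule linear_le_quadratic_imp_zero)
  hence "w \<bullet> w = 0" using wv unfolding w_def by (simp add: inner_diff_right)
  thus ?thesis unfolding w_def l_def by simp
qed

lemma symmetric_matrix_invariant_subspace_eigenvector:
  fixes A :: "real^'n^'n"
  assumes symA: "transpose A = A" and S: "subspace S" and inv: "\<forall>x\<in>S. A *v x \<in> S"
    and nontriv: "S \<noteq> {0}"
  obtains v where "v \<in> S" "norm v = 1" "A *v v = (v \<bullet> (A *v v)) *\<^sub>R v"
proof -
  obtain x where x: "x \<in> S" "x \<noteq> 0" using nontriv S subspace_0 by blast
  define K where "K = S \<inter> sphere 0 1"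
  have "compact K" unfolding K_def using closed_subspace[OF S] by (simp add: closed_Int_compact)
  moreover have "x /\<^sub>R norm x \<in> K" unfolding K_def using x S by (simp add: subspace_mul)
  hence "K \<noteq> {}" by blast
  moreover have "continuous_on K (\<lambda>u. u \<bullet> (A *v u))"
    by (intro continuous_intros linear_continuous_on)
      (simp add: linear_conv_bounded_linear[symmetric])
  ultimately obtain v where vK: "v \<in> K" and vmax: "\<forall>u\<in>K. u \<bullet> (A *v u) \<le> v \<bullet> (A *v v)"
    using continuous_attains_sup by blast
  have v: "v \<in> S" "norm v = 1" using vK unfolding K_def by auto
  moreover have "A *v v = (v \<bullet> (A *v v)) *\<^sub>R v"
    by (rule rayleigh_max_imp_eigenvector[OF symA S inv v]) (use vmax in \<open>auto simp: K_def\<close>)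
  ultimately show ?thesis by (rule that)
qed

lemma eigenvector_orthogonal_complement:
  fixes A :: "real^'n^'n"
  assumes symA: "transpose A = A" and S: "subspace S" and inv: "\<forall>x\<in>S. A *v x \<in> S"
    and v: "v \<in> S" "norm v = 1" and ev: "A *v v = \<mu> *\<^sub>R v"
  defines "S' \<equiv> {y \<in> S. y \<bullet> v = 0}"
  shows "subspace S'" "\<forall>y\<in>S'. A *v y \<in> S'" "dim S' < dim S"
proof -
  show subS': "subspace S'" using S unfolding S'_def subspace_def by (auto simp: inner_add_left)
  show "\<forall>y\<in>S'. A *v y \<in> S'"
  proof
    fix y assume y: "y \<in> S'"
    have "(A *v y) \<bullet> v = y \<bullet> (A *v v)" using symmetric_matrix_inner_commute[OF symA, of y v] by simp
    also have "\<dots> = 0" using y unfolding S'_def ev by simp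
    finally show "A *v y \<in> S'" using y inv unfolding S'_def by auto
  qed
  have "v \<bullet> v = 1" using v(2) by (simp add: dot_square_norm)
  hence "S' \<subset> S" using v unfolding S'_def by force
  thus "dim S' < dim S"
    using dim_psubset[of S' S] span_eq_iff[of S'] span_eq_iff[of S] subS' S by metis
qed

lemma symmetric_matrix_invariant_subspace_eigenbasis:
  fixes A :: "real^'n^'n"
  assumes symA: "transpose A = A"
  shows "subspace S \<Longrightarrow> (\<forall>x\<in>S. A *v x \<in> S) \<Longrightarrow>
    \<exists>B. B \<subseteq> S \<and> pairwise orthogonal B \<and> (\<forall>b\<in>B. norm b = 1) \<and>
        (\<forall>b\<in>B. A *v b = (b \<bullet> (A *v b)) *\<^sub>R b) \<and> span B = S"
proof (induction "dim S" arbitrary: S rule: less_induct)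
  case less
  show ?case
  proof (cases "S = {0}")
    case True
    thus ?thesis by (intro exI[of _ "{}"]) auto
  next
    case False
    then obtain v where v: "v \<in> S" "norm v = 1" and ev: "A *v v = (v \<bullet> (A *v v)) *\<^sub>R v"
      using symmetric_matrix_invariant_subspace_eigenvector[OF symA less.prems] by blast
    define S' where "S' = {y \<in> S. y \<bullet> v = 0}"
    note S' = eigenvector_orthogonal_complement[OF symA less.prems v ev, folded S'_def]
    from less.hyps[OF S'(3,1,2)] obtain B' where
      B': "B' \<subseteq> S'" "pairwise orthogonal B'" "\<forall>b\<in>B'. norm b = 1"
          "\<forall>b\<in>B'. A *v b = (b \<bullet> (A *v b)) *\<^sub>R b" "span B' = S'" by blast
    have vv: "v \<bullet> v = 1" using v(2) by (simp add: dot_square_norm)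
    show ?thesis
    proof (intro exI[of _ "insert v B'"] conjI)
      show "insert v B' \<subseteq> S" using B'(1) v unfolding S'_def by auto
      show "pairwise orthogonal (insert v B')"
        using B'(1,2) by (intro pairwise_orthogonal_insert) (auto simp: S'_def orthogonal_def inner_commute)
      show "\<forall>b\<in>insert v B'. norm b = 1" using B'(3) v by auto
      show "\<forall>b\<in>insert v B'. A *v b = (b \<bullet> (A *v b)) *\<^sub>R b" using B'(4) ev by auto
      show "span (insert v B') = S"
      proof
        show "span (insert v B') \<subseteq> S"
          using B'(1) v less.prems(1) unfolding S'_def by (intro span_minimal) auto
        show "S \<subseteq> span (insert v B')"
        proof
          fix y assume y: "y \<in> S"
          have "y - (y \<bullet> v) *\<^sub>R v \<in> S'" unfolding S'_def using y v vv less.prems(1)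
            by (simp add: subspace_diff subspace_mul inner_diff_left)
          thus "y \<in> span (insert v B')" unfolding span_insert B'(5) by blast
        qed
      qed
    qed
  qed
qed

definition orthonormal_basis :: "(real^'n) set \<Rightarrow> bool" where
  "orthonormal_basis B \<longleftrightarrow> finite B \<and> (\<forall>b\<in>B. \<forall>c\<in>B. b \<bullet> c = (if b = c then 1 else 0)) \<and>
     (\<forall>x. x = (\<Sum>b\<in>B. (b \<bullet> x) *\<^sub>R b))"

lemma orthonormal_inner_sum:
  assumes "finite B" "\<forall>b\<in>B. \<forall>c\<in>B. b \<bullet> c = (if b = c then 1 else 0)" "c \<in> B"
  shows "c \<bullet> (\<Sum>b\<in>B. g b *\<^sub>R b) = g c"
proof -
  have "c \<bullet> (\<Sum>b\<in>B. g b *\<^sub>R b) = (\<Sum>b\<in>B. g b * (c \<bullet> b))" by (simp add: inner_sum_right)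
  also have "\<dots> = (\<Sum>b\<in>B. if b = c then g c else 0)"
    using assms by (intro sum.cong) auto
  also have "\<dots> = g c" using assms by simp
  finally show ?thesis .
qed

lemma symmetric_matrix_orthonormal_eigenbasis:
  fixes A :: "real^'n^'n"
  assumes symA: "transpose A = A"
  obtains B where "orthonormal_basis B" "\<forall>b\<in>B. A *v b = (b \<bullet> (A *v b)) *\<^sub>R b"
proof -
  obtain B where B: "pairwise orthogonal B" "\<forall>b\<in>B. norm b = 1"
          "\<forall>b\<in>B. A *v b = (b \<bullet> (A *v b)) *\<^sub>R b" "span B = UNIV"
    using symmetric_matrix_invariant_subspace_eigenbasis[OF symA, of UNIV] by auto
  have "0 \<notin> B" using B(2) by auto
  hence fin: "finite B" using pairwise_orthogonal_independent[OF B(1)] independent_imp_finite by blast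
  have ortho: "\<forall>b\<in>B. \<forall>c\<in>B. b \<bullet> c = (if b = c then 1 else 0)"
    using B(1,2) by (auto simp: pairwise_def orthogonal_def dot_square_norm)
  have "x = (\<Sum>b\<in>B. (b \<bullet> x) *\<^sub>R b)" for x
  proof -
    define y where "y = x - (\<Sum>b\<in>B. (b \<bullet> x) *\<^sub>R b)"
    have "orthogonal y c" if c: "c \<in> B" for c
    proof -
      have "c \<bullet> (\<Sum>b\<in>B. (b \<bullet> x) *\<^sub>R b) = c \<bullet> x"
        by (rule orthonormal_inner_sum[OF fin ortho c])
      thus ?thesis unfolding y_def by (simp add: orthogonal_def inner_diff_right inner_commute)
    qed
    hence "orthogonal y y" using B(4) orthogonal_to_span[of y B y] by auto
    thus ?thesis unfolding y_def orthogonal_def by simp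
  qed
  thus ?thesis using that fin ortho B(3) unfolding orthonormal_basis_def by blast
qed

definition outer :: "real^'n \<Rightarrow> real^'m \<Rightarrow> real^'m^'n" where
  "outer u v = (\<chi> i j. u$i * v$j)"

definition onb_diag :: "(real^'n) set \<Rightarrow> (real^'n \<Rightarrow> real) \<Rightarrow> real^'n^'n" where
  "onb_diag B f = (\<Sum>b\<in>B. f b *\<^sub>R outer b b)"

lemma outer_mult_vector: "outer u v *v x = (v \<bullet> x) *\<^sub>R u"
  by (simp add: outer_def matrix_vector_mult_def vec_eq_iff inner_vec_def sum_distrib_left mult_ac)

lemma sum_matrix_vector_mult: "(\<Sum>i\<in>I. M i) *v (x::real^'n) = (\<Sum>i\<in>I. M i *v x)"
  by (induction I rule: infinite_finite_induct) (auto simp: matrix_vector_mult_add_rdistrib)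

lemma scaleR_matrix_vector_mult: "((c::real) *\<^sub>R (M::real^'n^'m)) *v x = c *\<^sub>R (M *v x)"
  by (simp add: matrix_vector_mult_def vec_eq_iff sum_distrib_left mult_ac)

lemma onb_diag_mult_vector: "onb_diag B f *v x = (\<Sum>b\<in>B. (f b * (b \<bullet> x)) *\<^sub>R b)"
  by (simp add: onb_diag_def sum_matrix_vector_mult scaleR_matrix_vector_mult outer_mult_vector)

lemma onb_diag_inner:
  "orthonormal_basis B \<Longrightarrow> c \<in> B \<Longrightarrow> c \<bullet> (onb_diag B f *v x) = f c * (c \<bullet> x)"
  unfolding onb_diag_mult_vector orthonormal_basis_def by (simp add: orthonormal_inner_sum)

lemma onb_diag_mult:
  assumes "orthonormal_basis B"
  shows "onb_diag B f ** onb_diag B g = onb_diag B (\<lambda>b. f b * g b)"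
proof -
  have "onb_diag B f *v (onb_diag B g *v x) = onb_diag B (\<lambda>b. f b * g b) *v x" for x
    unfolding onb_diag_mult_vector[of B f] onb_diag_mult_vector[of B "\<lambda>b. f b * g b"] using assms
    by (intro sum.cong refl) (simp add: onb_diag_inner)
  thus ?thesis by (simp add: matrix_eq matrix_vector_mul_assoc)
qed

lemma transpose_sum: "transpose (\<Sum>i\<in>I. M i) = (\<Sum>i\<in>I. transpose (M i))"
  by (induction I rule: infinite_finite_induct) (auto simp: transpose_def vec_eq_iff)

lemma transpose_outer: "transpose (outer u v) = outer v u"
  by (simp add: outer_def transpose_def vec_eq_iff mult.commute)

lemma transpose_onb_diag: "transpose (onb_diag B f) = onb_diag B f"
  by (simp add: onb_diag_def transpose_sum transpose_scalar transpose_outer)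

lemma trace_sum: "trace (\<Sum>i\<in>I. M i) = (\<Sum>i\<in>I. trace (M i :: 'a::comm_semiring_1^'n^'n))"
  by (induction I rule: infinite_finite_induct) (auto simp: trace_add trace_0[simplified])

lemma trace_scaleR: "trace ((c::real) *\<^sub>R M) = c * trace M"
  by (simp add: trace_def sum_distrib_left)

lemma trace_outer: "trace (outer u v) = u \<bullet> v"
  by (simp add: trace_def outer_def inner_vec_def)

lemma trace_onb_diag: "orthonormal_basis B \<Longrightarrow> trace (onb_diag B f) = (\<Sum>b\<in>B. f b)"
  unfolding onb_diag_def trace_sum trace_scaleR trace_outer orthonormal_basis_def by simp

lemma onb_diag_quadratic_form: "x \<bullet> (onb_diag B f *v x) = (\<Sum>b\<in>B. f b * (b \<bullet> x)\<^sup>2)"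
  by (simp add: onb_diag_mult_vector inner_sum_right power2_eq_square inner_commute mult_ac)

lemma psd_onb_diag: "(\<forall>b\<in>B. f b \<ge> 0) \<Longrightarrow> psd (onb_diag B f)"
  unfolding psd_def onb_diag_quadratic_form using transpose_onb_diag by (auto intro!: sum_nonneg)

lemma eigenbasis_eq_onb_diag:
  assumes "orthonormal_basis B" "\<forall>b\<in>B. A *v b = f b *\<^sub>R b"
  shows "A = onb_diag B f"
proof -
  have "A *v x = onb_diag B f *v x" for x
  proof -
    have "A *v x = A *v (\<Sum>b\<in>B. (b \<bullet> x) *\<^sub>R b)" using assms(1) unfolding orthonormal_basis_def by metis
    also have "\<dots> = (\<Sum>b\<in>B. (b \<bullet> x) *\<^sub>R (A *v b))"
      by (simp add: linear_sum[OF matrix_vector_mul_linear] matrix_vector_mult_scaleR)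
    also have "\<dots> = onb_diag B f *v x" unfolding onb_diag_mult_vector using assms(2)
      by (intro sum.cong) (auto simp: mult.commute)
    finally show ?thesis .
  qed
  thus ?thesis by (simp add: matrix_eq)
qed

lemma onb_diag_cong: "(\<And>b. b \<in> B \<Longrightarrow> f b = g b) \<Longrightarrow> onb_diag B f = onb_diag B g"
  unfolding onb_diag_def by (intro sum.cong) auto

lemma symmetric_matrix_onb_diag:
  fixes A :: "real^'n^'n"
  assumes "transpose A = A"
  obtains E where "orthonormal_basis E" "A = onb_diag E (\<lambda>b. b \<bullet> (A *v b))"
  using symmetric_matrix_orthonormal_eigenbasis[OF assms] eigenbasis_eq_onb_diag by metis

section \<open>Square roots and trace norms of positive semidefinite matrices\<close>

lemma psd_inner_zero_imp_zero:
  fixes B :: "real^'n^'n"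
  assumes "psd B" "x \<bullet> (B *v x) = 0"
  shows "B *v x = 0"
proof -
  have sym: "transpose B = B" using assms(1) by (simp add: psd_def)
  have "y \<bullet> (B *v x) = 0" for y
  proof (rule linear_le_quadratic_imp_zero[where d = "y \<bullet> (B *v y)"])
    fix t :: real
    have "0 \<le> (x - t *\<^sub>R y) \<bullet> (B *v (x - t *\<^sub>R y))" using assms(1) by (simp add: psd_def)
    also have "\<dots> = t\<^sup>2 * (y \<bullet> (B *v y)) - 2 * t * (y \<bullet> (B *v x))"
      using symmetric_matrix_inner_commute[OF sym, of x y] assms(2)
      by (simp add: matrix_vector_mult_diff_distrib matrix_vector_mult_scaleR inner_diff_left
          inner_diff_right power2_eq_square algebra_simps inner_commute)
    finally show "2 * t * (y \<bullet> (B *v x)) \<le> t\<^sup>2 * (y \<bullet> (B *v y))" by simp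
  qed
  from this[of "B *v x"] show ?thesis by simp
qed

text \<open>An eigenvector \<open>e\<close> of \<open>B - C\<close> with eigenvalue \<open>\<mu>\<close> satisfies
  \<open>\<mu> (e\<bullet>Be + e\<bullet>Ce) = e\<bullet>(B\<^sup>2 - C\<^sup>2)e = 0\<close>, so \<open>\<mu> \<noteq> 0\<close> would force \<open>Be = Ce = 0\<close>.\<close>
lemma psd_sqrt_unique:
  fixes B C :: "real^'n^'n"
  assumes B: "psd B" and C: "psd C" and eq: "B ** B = C ** C"
  shows "B = C"
proof -
  define D where "D = B - C"
  have symD: "transpose D = D" using B C unfolding D_def psd_def by (simp add: transpose_def vec_eq_iff)
  obtain E where E: "orthonormal_basis E" "\<forall>e\<in>E. D *v e = (e \<bullet> (D *v e)) *\<^sub>R e"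
    using symmetric_matrix_orthonormal_eigenbasis[OF symD] by blast
  have BC: "B *v (B *v z) = C *v (C *v z)" for z using eq by (simp add: matrix_vector_mul_assoc)
  have "e \<bullet> (D *v e) = 0" if e: "e \<in> E" for e
  proof (rule ccontr)
    define \<mu> where "\<mu> = e \<bullet> (D *v e)"
    assume "e \<bullet> (D *v e) \<noteq> 0"
    hence mu: "\<mu> \<noteq> 0" unfolding \<mu>_def .
    have De: "D *v e = \<mu> *\<^sub>R e" using E(2) e unfolding \<mu>_def by blast
    have "B *v (D *v e) + D *v (C *v e) = 0"
      unfolding D_def using BC[of e]
      by (simp add: matrix_vector_mult_diff_rdistrib matrix_vector_mult_diff_distrib)
    hence "e \<bullet> (B *v (D *v e)) + e \<bullet> (D *v (C *v e)) = 0" by (metis inner_add_right inner_zero_right)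
    moreover have "e \<bullet> (D *v (C *v e)) = \<mu> * (e \<bullet> (C *v e))"
      using symmetric_matrix_inner_commute[OF symD, of e "C *v e"] De by simp
    ultimately have "\<mu> * (e \<bullet> (B *v e) + e \<bullet> (C *v e)) = 0"
      using De by (simp add: matrix_vector_mult_scaleR algebra_simps)
    hence "e \<bullet> (B *v e) + e \<bullet> (C *v e) = 0" using mu by simp
    moreover have "e \<bullet> (B *v e) \<ge> 0" "e \<bullet> (C *v e) \<ge> 0" using B C by (auto simp: psd_def)
    ultimately have "e \<bullet> (B *v e) = 0" "e \<bullet> (C *v e) = 0" by linarith+
    hence "B *v e = 0" "C *v e = 0" using psd_inner_zero_imp_zero B C by blast+
    hence "\<mu> = 0" unfolding \<mu>_def D_def by (simp add: matrix_vector_mult_diff_rdistrib)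
    with mu show False ..
  qed
  hence "D = onb_diag E (\<lambda>_. 0)" using eigenbasis_eq_onb_diag[OF E(1)] E(2) by simp
  thus ?thesis unfolding D_def onb_diag_def by simp
qed

lemma msqrt_eqI: "psd S \<Longrightarrow> S ** S = A \<Longrightarrow> msqrt A = S"
  unfolding msqrt_def by (rule the_equality) (auto intro: psd_sqrt_unique)

lemma msqrt_onb_diag:
  assumes E: "orthonormal_basis E" and f: "\<forall>b\<in>E. f b \<ge> 0"
  shows "msqrt (onb_diag E f) = onb_diag E (\<lambda>b. sqrt (f b))"
proof (rule msqrt_eqI)
  show "psd (onb_diag E (\<lambda>b. sqrt (f b)))" using f by (intro psd_onb_diag) simp
  show "onb_diag E (\<lambda>b. sqrt (f b)) ** onb_diag E (\<lambda>b. sqrt (f b)) = onb_diag E f"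
    unfolding onb_diag_mult[OF E] using f by (intro onb_diag_cong) simp
qed

lemma
  assumes A: "psd A"
  shows psd_msqrt: "psd (msqrt A)" and msqrt_mult_msqrt: "msqrt A ** msqrt A = A"
proof -
  obtain E where E: "orthonormal_basis E" and AE: "A = onb_diag E (\<lambda>b. b \<bullet> (A *v b))"
    using symmetric_matrix_onb_diag A unfolding psd_def by blast
  have nonneg: "\<forall>b\<in>E. b \<bullet> (A *v b) \<ge> 0" using A by (simp add: psd_def)
  have sqrtA: "msqrt A = onb_diag E (\<lambda>b. sqrt (b \<bullet> (A *v b)))"
    by (subst AE) (rule msqrt_onb_diag[OF E nonneg])
  show "psd (msqrt A)" unfolding sqrtA using nonneg by (intro psd_onb_diag) simp
  show "msqrt A ** msqrt A = A" unfolding sqrtA onb_diag_mult[OF E]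
    using nonneg by (subst (3) AE) (intro onb_diag_cong, simp)
qed

lemma posdef_imp_psd: "posdef G \<Longrightarrow> psd G"
  unfolding posdef_def psd_def by (metis inner_zero_left order_refl less_imp_le)

lemma psd_congruence:
  assumes G: "psd G"
  shows "psd (transpose P ** G ** P)"
  unfolding psd_def
proof
  show "transpose (transpose P ** G ** P) = transpose P ** G ** P"
    using G by (simp add: psd_def matrix_transpose_mul matrix_mul_assoc)
  show "\<forall>x. 0 \<le> x \<bullet> ((transpose P ** G ** P) *v x)"
  proof
    fix x
    have "x \<bullet> ((transpose P ** G ** P) *v x) = (P *v x) \<bullet> (G *v (P *v x))"
      using transpose_matrix_inner[of x P "G *v (P *v x)"]
      by (simp add: matrix_vector_mul_assoc[symmetric] del: transpose_matrix_vector)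
    thus "0 \<le> x \<bullet> ((transpose P ** G ** P) *v x)" using G by (simp add: psd_def)
  qed
qed

lemma psd_gram: "psd (transpose Y ** Y)"
  using psd_congruence[of "mat 1" Y] by (simp add: psd_def)

text \<open>With the junk value \<open>inverse 0 = 0\<close>, the middle factor inverts \<open>\<surd>(Y\<^sup>T Y)\<close> on its
  range and vanishes on its kernel, which is also the kernel of \<open>Y\<close>.\<close>
lemma msqrt_gram_transpose:
  fixes Y :: "real^'a^'b"
  assumes E: "orthonormal_basis E" and Q: "transpose Y ** Y = onb_diag E lam"
  shows "msqrt (Y ** transpose Y) = Y ** onb_diag E (\<lambda>b. inverse (sqrt (lam b))) ** transpose Y"
proof -
  define g where "g b = inverse (sqrt (lam b))" for b
  have Yb: "(Y *v b) \<bullet> (Y *v b) = lam b" if "b \<in> E" for b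
  proof -
    have "(Y *v b) \<bullet> (Y *v b) = b \<bullet> (onb_diag E lam *v b)"
      unfolding Q[symmetric] using transpose_matrix_inner[of b Y "Y *v b"]
      by (simp add: matrix_vector_mul_assoc del: transpose_matrix_vector)
    also have "\<dots> = lam b" using that E by (simp add: onb_diag_inner orthonormal_basis_def)
    finally show ?thesis .
  qed
  hence lam_nonneg: "lam b \<ge> 0" if "b \<in> E" for b using that by (metis inner_ge_zero)
  have "Y *v (onb_diag E (\<lambda>b. g b * (lam b * g b)) *v x) = Y *v x" for x
  proof -
    have "Y *v x = Y *v (\<Sum>b\<in>E. (b \<bullet> x) *\<^sub>R b)" using E unfolding orthonormal_basis_def by metis
    also have "\<dots> = (\<Sum>b\<in>E. (g b * (lam b * g b) * (b \<bullet> x)) *\<^sub>R (Y *v b))"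
    proof (simp add: linear_sum[OF matrix_vector_mul_linear] matrix_vector_mult_scaleR,
        intro sum.cong refl)
      fix b assume "b \<in> E"
      show "(b \<bullet> x) *\<^sub>R (Y *v b) = (g b * (lam b * g b) * (b \<bullet> x)) *\<^sub>R (Y *v b)"
        using Yb[OF \<open>b \<in> E\<close>] lam_nonneg[OF \<open>b \<in> E\<close>]
        by (cases "lam b = 0") (simp_all add: g_def field_simps)
    qed
    also have "\<dots> = Y *v (onb_diag E (\<lambda>b. g b * (lam b * g b)) *v x)"
      unfolding onb_diag_mult_vector
      by (simp add: linear_sum[OF matrix_vector_mul_linear] matrix_vector_mult_scaleR)
    finally show ?thesis ..
  qed
  hence proj: "Y ** onb_diag E (\<lambda>b. g b * (lam b * g b)) = Y"
    by (simp add: matrix_eq matrix_vector_mul_assoc)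
  have "msqrt (Y ** transpose Y) = Y ** onb_diag E g ** transpose Y"
  proof (rule msqrt_eqI)
    show "psd (Y ** onb_diag E g ** transpose Y)"
      using psd_congruence[of "onb_diag E g" "transpose Y"] psd_onb_diag[of E g] lam_nonneg
      by (simp add: g_def)
    have "(Y ** onb_diag E g ** transpose Y) ** (Y ** onb_diag E g ** transpose Y)
        = Y ** (onb_diag E g ** (transpose Y ** Y) ** onb_diag E g) ** transpose Y"
      by (simp add: matrix_mul_assoc)
    thus "(Y ** onb_diag E g ** transpose Y) ** (Y ** onb_diag E g ** transpose Y) = Y ** transpose Y"
      unfolding Q onb_diag_mult[OF E] using proj by (simp add: mult_ac)
  qed
  thus ?thesis unfolding g_def .
qed

lemma trace_msqrt_gram_commute:
  fixes Y :: "real^'a^'b"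
  shows "trace (msqrt (transpose Y ** Y)) = trace (msqrt (Y ** transpose Y))"
proof -
  define lam where "lam b = b \<bullet> ((transpose Y ** Y) *v b)" for b
  obtain E where E: "orthonormal_basis E" and Q: "transpose Y ** Y = onb_diag E lam"
    using symmetric_matrix_onb_diag psd_gram unfolding psd_def lam_def by metis
  have lam_nonneg: "\<forall>b\<in>E. lam b \<ge> 0" using psd_gram unfolding psd_def lam_def by blast
  have "trace (msqrt (Y ** transpose Y))
      = trace (onb_diag E (\<lambda>b. inverse (sqrt (lam b))) ** (transpose Y ** Y))"
    unfolding msqrt_gram_transpose[OF E Q] by (metis matrix_mul_assoc trace_mul_sym)
  also have "\<dots> = (\<Sum>b\<in>E. inverse (sqrt (lam b)) * lam b)"
    unfolding Q onb_diag_mult[OF E] trace_onb_diag[OF E] ..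
  also have "\<dots> = (\<Sum>b\<in>E. sqrt (lam b))"
    using lam_nonneg by (intro sum.cong refl) (metis divide_inverse_commute real_div_sqrt)
  also have "\<dots> = trace (msqrt (transpose Y ** Y))"
    unfolding Q msqrt_onb_diag[OF E lam_nonneg] trace_onb_diag[OF E] ..
  finally show ?thesis ..
qed

lemma matrix_mult_uminus_left: "(- A) ** B = - (A ** (B::real^'k^'m))"
  by (simp add: matrix_matrix_mult_def vec_eq_iff sum_negf)

lemma matrix_mult_uminus_right: "A ** (- B) = - (A ** (B::real^'k^'m))"
  by (simp add: matrix_matrix_mult_def vec_eq_iff sum_negf)

lemma mabs_uminus: "mabs (- A) = mabs (A::real^'n^'n)"
proof -
  have "transpose (- A) ** (- A) = transpose A ** A"
    by (simp add: matrix_matrix_mult_def transpose_def vec_eq_iff)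
  thus ?thesis unfolding mabs_def by simp
qed

lemma trace_msqrt_congruence:
  fixes G :: "real^'k^'k" and P :: "real^'d^'k" and R :: "real^'d^'d"
  assumes G: "psd G"
  defines "H \<equiv> transpose P ** G ** P"
  shows "trace (msqrt G ** (P ** R ** transpose P) ** msqrt G) = trace (msqrt H ** R ** msqrt H)"
proof -
  have H: "psd H" unfolding H_def by (rule psd_congruence[OF G])
  have "trace (msqrt G ** (P ** R ** transpose P) ** msqrt G)
      = trace ((P ** R ** transpose P) ** (msqrt G ** msqrt G))"
    by (metis matrix_mul_assoc trace_mul_sym)
  also have "\<dots> = trace (P ** (R ** (transpose P ** G)))"
    using msqrt_mult_msqrt[OF G] by (simp add: matrix_mul_assoc)
  also have "\<dots> = trace (R ** H)" unfolding H_def by (metis trace_mul_sym matrix_mul_assoc)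
  also have "\<dots> = trace (msqrt H ** R ** msqrt H)"
    using msqrt_mult_msqrt[OF H] by (metis trace_mul_sym matrix_mul_assoc)
  finally show ?thesis .
qed

text \<open>Both sides are \<open>tr \<surd>(Y\<^sup>T Y)\<close> resp. \<open>tr \<surd>(Y Y\<^sup>T)\<close> for \<open>Y = \<surd>H K P\<^sup>T \<surd>G\<close>.\<close>
lemma trace_mabs_congruence:
  fixes G :: "real^'k^'k" and P :: "real^'d^'k" and K :: "real^'d^'d"
  assumes G: "psd G"
  defines "H \<equiv> transpose P ** G ** P"
  shows "trace (mabs (msqrt G ** (P ** K ** transpose P) ** msqrt G)) = trace (mabs (msqrt H ** K ** msqrt H))"
proof -
  have H: "psd H" unfolding H_def by (rule psd_congruence[OF G])
  define g where "g = msqrt G"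
  define s where "s = msqrt H"
  have gT: "transpose g = g" and gg: "g ** g = G"
    unfolding g_def using psd_msqrt[OF G] msqrt_mult_msqrt[OF G] by (auto simp: psd_def)
  have sT: "transpose s = s" and ss: "s ** s = H"
    unfolding s_def using psd_msqrt[OF H] msqrt_mult_msqrt[OF H] by (auto simp: psd_def)
  define M where "M = g ** P"
  have HM: "H = transpose M ** M" unfolding H_def M_def
    by (simp add: matrix_transpose_mul gT matrix_mul_assoc gg[symmetric])
  have ss': "s ** (s ** Z) = H ** Z" for Z :: "real^'z^'d" using ss by (simp add: matrix_mul_assoc)
  have MM': "transpose M ** (M ** Z) = H ** Z" for Z :: "real^'z^'d" using HM by (simp add: matrix_mul_assoc)
  define Y where "Y = s ** K ** transpose M"
  have "msqrt G ** (P ** K ** transpose P) ** msqrt G = M ** K ** transpose M"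
    unfolding M_def g_def[symmetric] by (simp add: matrix_transpose_mul gT matrix_mul_assoc)
  hence "trace (mabs (msqrt G ** (P ** K ** transpose P) ** msqrt G))
      = trace (msqrt (transpose (M ** K ** transpose M) ** (M ** K ** transpose M)))"
    unfolding mabs_def by simp
  also have "\<dots> = trace (msqrt (transpose Y ** Y))"
    unfolding Y_def by (simp add: matrix_transpose_mul sT matrix_mul_assoc[symmetric] ss' MM')
  also have "\<dots> = trace (msqrt (Y ** transpose Y))" by (rule trace_msqrt_gram_commute)
  also have "\<dots> = trace (msqrt ((s ** K ** s) ** transpose (s ** K ** s)))"
    unfolding Y_def by (simp add: matrix_transpose_mul sT matrix_mul_assoc[symmetric] ss' MM')
  also have "\<dots> = trace (mabs (s ** K ** s))"
    unfolding mabs_def by (rule trace_msqrt_gram_commute[symmetric])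
  finally show ?thesis unfolding s_def .
qed

section \<open>Complex matrices and strictly positive densities\<close>

lemma matrix_add_rdistrib: "(A + B) ** C = A ** C + B ** (C::'a::semiring_1^'k^'n)"
  by (vector matrix_matrix_mult_def sum.distrib[symmetric] field_simps)

lemma matrix_diff_ldistrib: "C ** (A - B) = C ** A - C ** (B::'a::ring_1^'k^'n)"
  by (vector matrix_matrix_mult_def sum_subtractf[symmetric] field_simps)

lemma matrix_sum_ldistrib: "A ** (\<Sum>i\<in>I. f i) = (\<Sum>i\<in>I. A ** f i :: 'a::comm_semiring_1^'k^'n)"
  by (induction I rule: infinite_finite_induct) (auto simp: matrix_add_ldistrib)

lemma matrix_sum_rdistrib: "(\<Sum>i\<in>I. f i) ** A = (\<Sum>i\<in>I. f i ** A :: 'a::comm_semiring_1^'k^'n)"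
  by (induction I rule: infinite_finite_induct) (auto simp: matrix_add_rdistrib)

lemma scaleR_complex_eq: "r *\<^sub>R (z::complex) = of_real r * z"
  by (rule scaleR_conv_of_real)

lemma adj_adj [simp]: "adj (adj A) = A"
  by (simp add: adj_def vec_eq_iff)

lemma adj_mult: "adj (A ** B) = adj B ** adj (A::complex^'n^'m)"
  by (simp add: adj_def matrix_matrix_mult_def vec_eq_iff mult.commute)

lemma adj_add: "adj (A + B) = adj A + adj B"
  by (simp add: adj_def vec_eq_iff)

lemma adj_diff: "adj (A - B) = adj A - adj B"
  by (simp add: adj_def vec_eq_iff)

lemma adj_scaleR: "adj (r *\<^sub>R A) = r *\<^sub>R adj A"
  by (simp add: adj_def vec_eq_iff scaleR_complex_eq)

lemma adj_cscale: "adj (cscale c A) = cscale (cnj c) (adj A)"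
  by (simp add: adj_def cscale_def vec_eq_iff)

lemma adj_sum: "adj (\<Sum>i\<in>I. f i) = (\<Sum>i\<in>I. adj (f i))"
  by (induction I rule: infinite_finite_induct) (auto simp: adj_add adj_def vec_eq_iff)

lemma trace_adj: "trace (adj A) = cnj (trace A)"
  by (simp add: adj_def trace_def)

lemma bounded_linear_adj: "bounded_linear (adj :: complex^'n^'m \<Rightarrow> complex^'m^'n)"
  unfolding linear_conv_bounded_linear[symmetric] by (rule linearI) (simp_all add: adj_add adj_scaleR)

lemma cscale_mult_left: "cscale c A ** B = cscale c (A ** B)"
  by (simp add: cscale_def matrix_matrix_mult_def vec_eq_iff sum_distrib_left mult.assoc)

lemma cscale_mult_right: "A ** cscale c B = cscale c (A ** (B::complex^'k^'n))"
  by (simp add: cscale_def matrix_matrix_mult_def vec_eq_iff sum_distrib_left mult_ac)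

lemma trace_cscale: "trace (cscale c A) = c * trace A"
  by (simp add: cscale_def trace_def sum_distrib_left)

lemma scaleR_eq_cscale: "r *\<^sub>R A = cscale (of_real r) A"
  by (simp add: cscale_def vec_eq_iff scaleR_complex_eq)

lemma cscale_add_left: "cscale (c + d) A = cscale c A + cscale d A"
  by (simp add: cscale_def vec_eq_iff algebra_simps)

lemma cscale_cscale: "cscale c (cscale d A) = cscale (c * d) A"
  by (simp add: cscale_def vec_eq_iff)

lemma cscale_sum: "cscale c (\<Sum>i\<in>I. f i) = (\<Sum>i\<in>I. cscale c (f i))"
  by (induction I rule: infinite_finite_induct) (auto simp: cscale_def vec_eq_iff distrib_left)

lemma trace_mult_cscale_sum:
  "trace (A ** (\<Sum>m\<in>I. cscale (f m) (B m))) = (\<Sum>m\<in>I. f m * trace (A ** B m :: complex^'n^'n))"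
  by (simp add: matrix_sum_ldistrib cscale_mult_right trace_sum trace_cscale)

lemma trace_cscale_sum_mult:
  "trace ((\<Sum>m\<in>I. cscale (f m) (B m)) ** A) = (\<Sum>m\<in>I. f m * trace (B m ** A :: complex^'n^'n))"
  by (simp add: matrix_sum_rdistrib cscale_mult_left trace_sum trace_cscale)

definition mconj :: "complex^'m^'n \<Rightarrow> complex^'m^'n" where
  "mconj W = (\<chi> i j. cnj (W$i$j))"

definition of_real_mat :: "real^'m^'n \<Rightarrow> complex^'m^'n" where
  "of_real_mat A = (\<chi> i j. complex_of_real (A$i$j))"

lemma mconj_mconj [simp]: "mconj (mconj W) = W"
  by (simp add: mconj_def vec_eq_iff)

lemma mconj_mult: "mconj (A ** B) = mconj A ** mconj (B::complex^'k^'m)"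
  by (simp add: mconj_def matrix_matrix_mult_def vec_eq_iff)

lemma mconj_of_real_mat [simp]: "mconj (of_real_mat A) = of_real_mat A"
  by (simp add: mconj_def of_real_mat_def vec_eq_iff)

lemma transpose_of_real_mat: "transpose (of_real_mat A) = of_real_mat (transpose A)"
  by (simp add: of_real_mat_def transpose_def vec_eq_iff)

lemma adj_eq_transpose_mconj: "adj C = transpose (mconj C)"
  by (simp add: adj_def mconj_def transpose_def vec_eq_iff)

lemma mRe_real_sandwich: "mRe (of_real_mat A ** mconj W ** of_real_mat B) = A ** mRe W ** (B::real^'k^'m)"
  by (simp add: mRe_def mconj_def of_real_mat_def matrix_matrix_mult_def vec_eq_iff Re_sum)

lemma mIm_real_sandwich: "mIm (of_real_mat A ** mconj W ** of_real_mat B) = - (A ** mIm W ** (B::real^'k^'m))"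
  by (simp add: mIm_def mconj_def of_real_mat_def matrix_matrix_mult_def vec_eq_iff Im_sum sum_negf)

lemma invertible_matrix_inv:
  assumes "invertible (J::'a::semiring_1^'n^'n)"
  shows "J ** matrix_inv J = mat 1" "matrix_inv J ** J = mat 1"
proof -
  from assms obtain A where "J ** A = mat 1 \<and> A ** J = mat 1" unfolding invertible_def by blast
  hence "J ** matrix_inv J = mat 1 \<and> matrix_inv J ** J = mat 1"
    unfolding matrix_inv_def by (rule someI[of "\<lambda>A. J ** A = mat 1 \<and> A ** J = mat 1"])
  thus "J ** matrix_inv J = mat 1" "matrix_inv J ** J = mat 1" by auto
qed

lemma sandwich_matrix_inv:
  fixes J :: "complex^'d^'d" and C :: "complex^'d^'k" and P :: "real^'d^'k"
  assumes J: "invertible J" and PC: "of_real_mat P = mconj C ** J"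
  shows "C ** transpose J ** adj C = of_real_mat P ** mconj (matrix_inv J) ** of_real_mat (transpose P)"
proof -
  define Ji where "Ji = matrix_inv J"
  have JJi: "J ** Ji = mat 1" "Ji ** J = mat 1" using invertible_matrix_inv[OF J] unfolding Ji_def by auto
  have cC: "mconj C = of_real_mat P ** Ji" using PC JJi by (simp add: matrix_mul_assoc[symmetric])
  have C: "C = of_real_mat P ** mconj Ji" using arg_cong[OF cC, of mconj] by (simp add: mconj_mult)
  have aC: "adj C = transpose Ji ** of_real_mat (transpose P)"
    unfolding adj_eq_transpose_mconj cC by (simp add: matrix_transpose_mul transpose_of_real_mat)
  have JJiT: "transpose J ** transpose Ji = mat 1" using JJi by (metis matrix_transpose_mul transpose_mat)
  have "C ** transpose J ** adj C
      = (of_real_mat P ** mconj Ji) ** transpose J ** (transpose Ji ** of_real_mat (transpose P))"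
    by (simp only: aC) (simp only: C)
  also have "\<dots> = of_real_mat P ** mconj Ji ** (transpose J ** transpose Ji) ** of_real_mat (transpose P)"
    by (simp add: matrix_mul_assoc)
  also have "\<dots> = of_real_mat P ** mconj Ji ** of_real_mat (transpose P)"
    unfolding JJiT by simp
  finally show ?thesis unfolding Ji_def .
qed

lemma hermitian_commutator:
  assumes "hermitian X" "hermitian R"
  shows "hermitian (cscale \<i> (X ** R - R ** (X::complex^'n^'n)))"
proof -
  have "cscale (- \<i>) (R ** X - X ** R) = cscale \<i> (X ** R - R ** X)"
    by (simp add: cscale_def vec_eq_iff algebra_simps)
  thus ?thesis using assms unfolding hermitian_def by (simp add: adj_cscale adj_diff adj_mult)
qed

lemma hermitian_trace_mult_real:
  assumes "hermitian A" "hermitian B"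
  shows "trace (A ** B) = complex_of_real (Re (trace (A ** (B::complex^'n^'n))))"
proof -
  have "cnj (trace (A ** B)) = trace (B ** A)"
    using assms unfolding trace_adj[symmetric] adj_mult hermitian_def by simp
  also have "\<dots> = trace (A ** B)" by (rule trace_mul_sym)
  finally show ?thesis by (metis Reals_cnj_iff of_real_Re)
qed

lemma trace_adj_mult_mult:
  "trace (adj Y ** R ** Y) = (\<Sum>j\<in>UNIV. cinner (column j Y) (R *v column j (Y::complex^'k^'n)))"
  unfolding trace_def matrix_matrix_mult_def adj_def cinner_def column_def matrix_vector_mult_def
  by (simp add: sum_distrib_left sum_distrib_right mult_ac) (rule sum.cong[OF refl], rule sum.swap)

lemma strictly_pos_density_cinner_nonneg:
  "strictly_pos_density R \<Longrightarrow> Re (cinner x (R *v x)) \<ge> 0"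
  unfolding strictly_pos_density_def by (cases "x = 0") (auto simp: cinner_def intro: less_imp_le)

lemma strictly_pos_density_trace_nonneg:
  "strictly_pos_density R \<Longrightarrow> Re (trace (adj Y ** R ** Y)) \<ge> 0"
  unfolding trace_adj_mult_mult Re_sum by (intro sum_nonneg strictly_pos_density_cinner_nonneg)

lemma strictly_pos_density_trace_eq_0:
  assumes R: "strictly_pos_density R" and z: "Re (trace (adj Y ** R ** Y)) = 0"
  shows "Y = (0::complex^'k^'n)"
proof -
  have "\<forall>j\<in>UNIV. Re (cinner (column j Y) (R *v column j Y)) = 0"
    using z unfolding trace_adj_mult_mult Re_sum
    by (subst (asm) sum_nonneg_eq_0_iff) (auto intro: strictly_pos_density_cinner_nonneg[OF R])
  hence "column j Y = 0" for j
    using R unfolding strictly_pos_density_def by (metis UNIV_I less_irrefl)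
  thus ?thesis by (simp add: vec_eq_iff column_def)
qed

lemma strictly_pos_density_mult_eq_0:
  assumes R: "strictly_pos_density R" and z: "R ** Z = 0"
  shows "Z = (0::complex^'k^'n)"
proof -
  have "trace (adj Z ** R ** Z) = 0" using z by (simp add: matrix_mul_assoc[symmetric] trace_def)
  thus ?thesis by (intro strictly_pos_density_trace_eq_0[OF R]) simp
qed

text \<open>From \<open>R Y + Y R = 0\<close>: \<open>tr Y\<^sup>* R Y + tr Y R Y\<^sup>* = 0\<close> with both terms nonnegative.\<close>
lemma strictly_pos_density_jprod_eq_0:
  assumes R: "strictly_pos_density R" and z: "jprod R Y = 0"
  shows "Y = 0"
proof -
  have "R ** Y + Y ** R = 0" using z unfolding jprod_def by simp
  hence "trace (adj Y ** (R ** Y + Y ** R)) = 0" by (simp add: trace_def)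
  hence "trace (adj Y ** R ** Y) + trace (adj (adj Y) ** R ** adj Y) = 0"
    by (simp add: matrix_add_ldistrib trace_add matrix_mul_assoc) (metis matrix_mul_assoc trace_mul_sym)
  hence "Re (trace (adj Y ** R ** Y)) + Re (trace (adj (adj Y) ** R ** adj Y)) = 0"
    by (metis plus_complex.sel(1) zero_complex.sel(1))
  moreover have "Re (trace (adj Y ** R ** Y)) \<ge> 0" "Re (trace (adj (adj Y) ** R ** adj Y)) \<ge> 0"
    using strictly_pos_density_trace_nonneg[OF R] by blast+
  ultimately have "Re (trace (adj Y ** R ** Y)) = 0" by linarith
  thus ?thesis by (rule strictly_pos_density_trace_eq_0[OF R])
qed

lemma linear_jprod: "linear (jprod (R::complex^'n^'n))"
  by (rule linearI) (simp_all add: jprod_def matrix_add_ldistrib matrix_add_rdistrib matrix_scalar_ac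
      scalar_matrix_assoc[symmetric] algebra_simps)

lemma strictly_pos_density_jprod_ex1_hermitian:
  assumes R: "strictly_pos_density R" and C: "hermitian C"
  shows "\<exists>!Y. hermitian Y \<and> jprod R Y = C"
proof -
  have inj: "Y = Z" if "jprod R Y = jprod R Z" for Y Z
  proof -
    have "jprod R (Y - Z) = 0" using that linear_diff[OF linear_jprod] by (metis right_minus_eq)
    from strictly_pos_density_jprod_eq_0[OF R this] show ?thesis by simp
  qed
  hence "surj (jprod R)" using linear_jprod by (intro linear_injective_imp_surjective injI) auto
  then obtain Y where Y: "jprod R Y = C" by (metis surjD)
  have "jprod R (adj Y) = C"
    using R Y C unfolding strictly_pos_density_def hermitian_def jprod_def
    by (auto simp: adj_scaleR adj_add adj_mult add.commute)
  hence "hermitian Y" using inj Y unfolding hermitian_def by metis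
  thus ?thesis using Y inj by blast
qed

lemma strictly_pos_density_mult_ex1:
  assumes R: "strictly_pos_density (R::complex^'n^'n)"
  shows "\<exists>!L. C = R ** (L::complex^'n^'n)"
proof -
  have inj: "R ** Y = R ** Z \<Longrightarrow> Y = Z" for Y Z :: "complex^'n^'n"
    using strictly_pos_density_mult_eq_0[OF R, of "Y - Z"] by (simp add: matrix_diff_ldistrib)
  have "linear (\<lambda>Z. R ** (Z::complex^'n^'n))"
    by (rule linearI) (simp_all add: matrix_add_ldistrib matrix_scalar_ac scalar_matrix_assoc)
  hence "surj (\<lambda>Z. R ** (Z::complex^'n^'n))"
    using inj by (intro linear_injective_imp_surjective injI) auto
  thus ?thesis using inj by (metis surjD)
qed

lemma span_range_sum:
  fixes g :: "'d::finite \<Rightarrow> 'v::real_vector"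
  assumes "x \<in> span (range g)"
  obtains a where "x = (\<Sum>l\<in>UNIV. a l *\<^sub>R g l)"
proof -
  have "\<exists>a. x = (\<Sum>l\<in>UNIV. a l *\<^sub>R g l)" using assms
  proof (induction rule: span_induct_alt)
    case base
    show ?case by (intro exI[of _ "\<lambda>_. 0"]) simp
  next
    case (step r y z)
    then obtain m a where "y = g m" "z = (\<Sum>l\<in>UNIV. a l *\<^sub>R g l)" by blast
    have "(\<Sum>l\<in>UNIV. (if l = m then r else 0) *\<^sub>R g l) = (\<Sum>l\<in>UNIV. if l = m then r *\<^sub>R g m else 0)"
      by (intro sum.cong) auto
    hence "r *\<^sub>R y + z = (\<Sum>l\<in>UNIV. (a l + (if l = m then r else 0)) *\<^sub>R g l)"
      using \<open>y = g m\<close> \<open>z = _\<close> by (simp add: scaleR_add_left sum.distrib)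
    thus ?case by (rule exI[where x = "\<lambda>l. a l + (if l = m then r else 0)"])
  qed
  thus ?thesis using that by blast
qed

section \<open>Logarithmic derivatives of a D-invariant model\<close>

lemma has_derivative_hermitian:
  fixes \<rho> :: "real^'d \<Rightarrow> complex^'n^'n"
  assumes d: "(\<rho> has_derivative \<rho>') (at \<theta>)" and S: "open S" "\<theta> \<in> S"
    and h: "\<And>t. t \<in> S \<Longrightarrow> hermitian (\<rho> t)"
  shows "hermitian (\<rho>' v)"
proof -
  have "((\<lambda>t. adj (\<rho> t)) has_derivative (\<lambda>v. adj (\<rho>' v))) (at \<theta>)"
    by (rule bounded_linear.has_derivative[OF bounded_linear_adj d])
  hence "(\<rho> has_derivative (\<lambda>v. adj (\<rho>' v))) (at \<theta>)"
    by (rule has_derivative_transform_within_open[OF _ S]) (use h in \<open>simp add: hermitian_def\<close>)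
  from has_derivative_unique[OF d this] have "\<rho>' = (\<lambda>v. adj (\<rho>' v))" .
  thus ?thesis unfolding hermitian_def by metis
qed

lemma qmodel_partial_rho_hermitian:
  assumes "qmodel \<Theta> \<rho>" "\<theta> \<in> \<Theta>"
  shows "hermitian (partial_rho \<rho> \<theta> l)"
proof -
  have o: "open \<Theta>" and pd: "\<forall>t\<in>\<Theta>. strictly_pos_density (\<rho> t)"
    and "foldr dir_deriv [] \<rho> differentiable_on \<Theta>"
    using assms(1) unfolding qmodel_def smooth_on_def by blast+
  hence "\<rho> differentiable at \<theta>" using assms(2) by (simp add: differentiable_on_eq_differentiable_at)
  hence "(\<rho> has_derivative frechet_derivative \<rho> (at \<theta>)) (at \<theta>)" by (simp add: frechet_derivative_works)
  thus ?thesis unfolding partial_rho_def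
    by (rule has_derivative_hermitian[OF _ o assms(2)]) (use pd in \<open>auto simp: strictly_pos_density_def\<close>)
qed

lemma partial_rho_eq_jprod_SLD:
  assumes "strictly_pos_density (\<rho> \<theta>)" "hermitian (partial_rho \<rho> \<theta> l)"
  shows "partial_rho \<rho> \<theta> l = jprod (\<rho> \<theta>) (SLD \<rho> \<theta> l)"
proof -
  have "\<exists>!L. hermitian L \<and> partial_rho \<rho> \<theta> l = jprod (\<rho> \<theta>) L"
    using strictly_pos_density_jprod_ex1_hermitian[OF assms] by (simp only: eq_commute)
  from theI'[OF this] show ?thesis unfolding SLD_def by blast
qed

lemma partial_rho_eq_mult_RLD: "strictly_pos_density (\<rho> \<theta>) \<Longrightarrow> partial_rho \<rho> \<theta> l = \<rho> \<theta> ** RLD \<rho> \<theta> l"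
  unfolding RLD_def by (rule theI'[OF strictly_pos_density_mult_ex1])

lemma jprod_D_op:
  assumes "strictly_pos_density (\<rho> \<theta>)" "hermitian X"
  shows "jprod (\<rho> \<theta>) (D_op \<rho> \<theta> X) = cscale \<i> (X ** \<rho> \<theta> - \<rho> \<theta> ** X)"
  using assms theI'[OF strictly_pos_density_jprod_ex1_hermitian[OF assms(1) hermitian_commutator]]
  unfolding D_op_def strictly_pos_density_def by blast

lemma mult_eq_jprod_add_commutator:
  "R ** X = jprod R X + cscale (\<i>/2) (cscale \<i> (X ** R - R ** (X::complex^'n^'n)))"
  unfolding jprod_def vec_eq_iff cscale_def by (simp add: scaleR_complex_eq field_simps)

lemma D_invariant_RLD_expansion:
  assumes spd: "strictly_pos_density (\<rho> \<theta>)" and dh: "\<And>l. hermitian (partial_rho \<rho> \<theta> l)"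
    and Dinv: "D_invariant \<rho> \<theta>" and X: "hermitian X" "X \<in> span (range (SLD \<rho> \<theta>))"
  obtains c where "X = (\<Sum>l\<in>UNIV. cscale (c l) (RLD \<rho> \<theta> l))"
proof -
  have jprod_SLD_sum: "jprod (\<rho> \<theta>) (\<Sum>l\<in>UNIV. a l *\<^sub>R SLD \<rho> \<theta> l)
      = (\<Sum>l\<in>UNIV. a l *\<^sub>R partial_rho \<rho> \<theta> l)" for a
    by (simp add: linear_sum[OF linear_jprod] linear_scale[OF linear_jprod] partial_rho_eq_jprod_SLD[of \<rho> \<theta>, OF spd dh])
  obtain a where "X = (\<Sum>l\<in>UNIV. a l *\<^sub>R SLD \<rho> \<theta> l)" using span_range_sum[OF X(2)] .
  hence a: "jprod (\<rho> \<theta>) X = (\<Sum>l\<in>UNIV. a l *\<^sub>R partial_rho \<rho> \<theta> l)"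
    using jprod_SLD_sum by simp
  have "D_op \<rho> \<theta> X \<in> span (range (SLD \<rho> \<theta>))" using Dinv X(2) unfolding D_invariant_def by blast
  then obtain b where "D_op \<rho> \<theta> X = (\<Sum>l\<in>UNIV. b l *\<^sub>R SLD \<rho> \<theta> l)" by (rule span_range_sum)
  hence b: "jprod (\<rho> \<theta>) (D_op \<rho> \<theta> X) = (\<Sum>l\<in>UNIV. b l *\<^sub>R partial_rho \<rho> \<theta> l)"
    using jprod_SLD_sum by simp
  define c where "c l = complex_of_real (a l) + (\<i>/2) * complex_of_real (b l)" for l
  have "\<rho> \<theta> ** X = jprod (\<rho> \<theta>) X + cscale (\<i>/2) (jprod (\<rho> \<theta>) (D_op \<rho> \<theta> X))"
    unfolding jprod_D_op[of \<rho> \<theta>, OF spd X(1)] by (rule mult_eq_jprod_add_commutator)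
  also have "\<dots> = (\<Sum>l\<in>UNIV. cscale (c l) (partial_rho \<rho> \<theta> l))"
    unfolding a b scaleR_eq_cscale cscale_sum cscale_cscale c_def cscale_add_left sum.distrib ..
  also have "\<dots> = \<rho> \<theta> ** (\<Sum>l\<in>UNIV. cscale (c l) (RLD \<rho> \<theta> l))"
    unfolding matrix_sum_ldistrib cscale_mult_right partial_rho_eq_mult_RLD[of \<rho> \<theta>, OF spd] ..
  finally have "\<rho> \<theta> ** (X - (\<Sum>l\<in>UNIV. cscale (c l) (RLD \<rho> \<theta> l))) = 0"
    by (simp add: matrix_diff_ldistrib)
  from strictly_pos_density_mult_eq_0[OF spd this]
  have "X = (\<Sum>l\<in>UNIV. cscale (c l) (RLD \<rho> \<theta> l))" by simp
  thus ?thesis by (rule that)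
qed

lemma RLD_expansion_traces:
  fixes \<rho> :: "real^'d::finite \<Rightarrow> complex^'n::finite^'n" and X :: "'k::finite \<Rightarrow> complex^'n^'n"
  assumes spd: "strictly_pos_density (\<rho> \<theta>)" and Xh: "\<And>k. hermitian (X k)"
    and Xc: "\<And>k. X k = (\<Sum>l\<in>UNIV. cscale (c k l) (RLD \<rho> \<theta> l))"
  defines "C \<equiv> \<chi> k l. c k l" and "J \<equiv> RLD_Fisher \<rho> \<theta>"
  shows "(\<chi> k l. trace (partial_rho \<rho> \<theta> l ** X k)) = mconj C ** J"
    and "Zmat \<rho> \<theta> X = C ** transpose J ** adj C"
proof -
  have Xa: "X k = (\<Sum>m\<in>UNIV. cscale (cnj (c k m)) (adj (RLD \<rho> \<theta> m)))" for k
  proof -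
    have "X k = adj (X k)" using Xh[of k] by (simp add: hermitian_def)
    also have "\<dots> = (\<Sum>m\<in>UNIV. cscale (cnj (c k m)) (adj (RLD \<rho> \<theta> m)))"
      unfolding Xc[of k] adj_sum adj_cscale ..
    finally show ?thesis .
  qed
  have tr: "trace (A ** X k) = (\<Sum>m\<in>UNIV. cnj (c k m) * trace (A ** adj (RLD \<rho> \<theta> m)))" for A k
    unfolding Xa[of k] trace_mult_cscale_sum ..
  have "trace (partial_rho \<rho> \<theta> l ** X k) = (\<Sum>m\<in>UNIV. cnj (c k m) * J$m$l)" for k l
    unfolding tr partial_rho_eq_mult_RLD[of \<rho> \<theta>, OF spd] J_def RLD_Fisher_def by simp
  thus "(\<chi> k l. trace (partial_rho \<rho> \<theta> l ** X k)) = mconj C ** J"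
    unfolding mconj_def C_def matrix_matrix_mult_def by (simp add: vec_eq_iff)
  have "trace ((\<rho> \<theta> ** X k) ** adj (RLD \<rho> \<theta> b)) = (\<Sum>a\<in>UNIV. c k a * J$b$a)" for k b
  proof -
    have "trace ((\<rho> \<theta> ** X k) ** adj (RLD \<rho> \<theta> b))
        = trace ((\<Sum>a\<in>UNIV. cscale (c k a) (\<rho> \<theta> ** RLD \<rho> \<theta> a)) ** adj (RLD \<rho> \<theta> b))"
      unfolding Xc[of k] matrix_sum_ldistrib cscale_mult_right ..
    also have "\<dots> = (\<Sum>a\<in>UNIV. c k a * J$b$a)"
      unfolding trace_cscale_sum_mult J_def RLD_Fisher_def by simp
    finally show ?thesis .
  qed
  hence "trace (\<rho> \<theta> ** X k ** X j) = (\<Sum>b\<in>UNIV. (\<Sum>a\<in>UNIV. c k a * J$b$a) * cnj (c j b))" for k j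
    unfolding tr by (simp add: mult.commute)
  thus "Zmat \<rho> \<theta> X = C ** transpose J ** adj C"
    unfolding Zmat_def C_def matrix_matrix_mult_def transpose_def adj_def by (simp add: vec_eq_iff)
qed

lemma Zmat_RLD_sandwich:
  fixes \<rho> :: "real^'d::finite \<Rightarrow> complex^'n::finite^'n" and X :: "'k::finite \<Rightarrow> complex^'n^'n"
  assumes spd: "strictly_pos_density (\<rho> \<theta>)" and dh: "\<And>l. hermitian (partial_rho \<rho> \<theta> l)"
    and Xh: "\<And>k. hermitian (X k)" and Xc: "\<And>k. X k = (\<Sum>l\<in>UNIV. cscale (c k l) (RLD \<rho> \<theta> l))"
    and J: "invertible (RLD_Fisher \<rho> \<theta>)"
  defines "P \<equiv> Pmat \<rho> \<theta> X"
  shows "Zmat \<rho> \<theta> X = of_real_mat P ** mconj (matrix_inv (RLD_Fisher \<rho> \<theta>)) ** of_real_mat (transpose P)"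
proof -
  have "of_real_mat P = (\<chi> k l. trace (partial_rho \<rho> \<theta> l ** X k))"
    unfolding P_def Pmat_def of_real_mat_def
    by (simp add: vec_eq_iff hermitian_trace_mult_real[OF dh Xh, symmetric])
  hence "of_real_mat P = mconj (\<chi> k l. c k l) ** RLD_Fisher \<rho> \<theta>"
    unfolding RLD_expansion_traces(1)[of \<rho> \<theta>, OF spd Xh Xc] .
  thus ?thesis
    unfolding RLD_expansion_traces(2)[of \<rho> \<theta>, OF spd Xh Xc] by (rule sandwich_matrix_inv[OF J])
qed

theorem mainTheorem3:
  fixes \<Theta> :: "(real^'d::finite) set"
    and \<rho> :: "real^'d \<Rightarrow> complex^'n::finite^'n"
    and \<iota> :: "'k::finite \<Rightarrow> 'd"
    and \<theta> :: "real^'d"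
    and X :: "'k \<Rightarrow> complex^'n^'n"
    and G :: "real^'k^'k"
  assumes model: "qmodel \<Theta> \<rho>"
    and sub: "inj \<iota>"
    and theta_in: "\<theta> \<in> \<Theta>"
    and theta_sub: "\<forall>l. l \<notin> range \<iota> \<longrightarrow> \<theta> $ l = 0"
    and Dinv: "D_invariant \<rho> \<theta>"
    and Jinv: "invertible (RLD_Fisher \<rho> \<theta>)"
    and X_herm: "\<forall>k. hermitian (X k)"
    and X_span: "\<forall>k. X k \<in> span (range (SLD \<rho> \<theta>))"
    and X_unb: "\<forall>j k. trace (partial_rho \<rho> \<theta> (\<iota> k) ** X j) = (if j = k then 1 else 0)"
    and G_pd: "posdef G"
  shows "C_bound \<rho> \<theta> G X = RLD_bound \<rho> \<theta> (transpose (Pmat \<rho> \<theta> X) ** G ** Pmat \<rho> \<theta> X)"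
proof -
  define P where "P = Pmat \<rho> \<theta> X"
  define Ji where "Ji = matrix_inv (RLD_Fisher \<rho> \<theta>)"
  have spd: "strictly_pos_density (\<rho> \<theta>)" using model theta_in unfolding qmodel_def by blast
  have dh: "\<And>l. hermitian (partial_rho \<rho> \<theta> l)" by (rule qmodel_partial_rho_hermitian[OF model theta_in])
  have Xh: "\<And>k. hermitian (X k)" using X_herm by blast
  have "\<exists>c. X k = (\<Sum>l\<in>UNIV. cscale (c l) (RLD \<rho> \<theta> l))" for k
    using D_invariant_RLD_expansion[of \<rho> \<theta>, OF spd dh Dinv Xh] X_span by metis
  then obtain c where "\<And>k. X k = (\<Sum>l\<in>UNIV. cscale (c k l) (RLD \<rho> \<theta> l))" by metis
  from Zmat_RLD_sandwich[OF spd dh Xh this Jinv]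
  have Z: "Zmat \<rho> \<theta> X = of_real_mat P ** mconj Ji ** of_real_mat (transpose P)"
    unfolding P_def Ji_def .
  have G: "psd G" using G_pd by (rule posdef_imp_psd)
  have "C_bound \<rho> \<theta> G X = trace (msqrt G ** (P ** mRe Ji ** transpose P) ** msqrt G)
      + trace (mabs (msqrt G ** (P ** (- mIm Ji) ** transpose P) ** msqrt G))"
    unfolding C_bound_def Z mRe_real_sandwich mIm_real_sandwich
    by (simp add: matrix_mult_uminus_left matrix_mult_uminus_right)
  also have "\<dots> = RLD_bound \<rho> \<theta> (transpose P ** G ** P)"
    unfolding trace_msqrt_congruence[OF G] trace_mabs_congruence[OF G] RLD_bound_def Ji_def
    by (simp add: matrix_mult_uminus_left matrix_mult_uminus_right mabs_uminus Let_def)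
  finally show ?thesis unfolding P_def .
qed

end
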